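(* Let $S$ be a $0$-left cancellative semigroup and let $\sigma$ be a maximal string in $S$. Then either $\sigma$ is open, or $\sigma=\delta_r=\{t\in S:t\mid r\}$ for some $r\in S$ with $rS=\{0\}$.
   Context: $S$ has zero $0$; $0$-left cancellative: $st=sr\neq0\Rightarrow t=r$. $\tilde S=S\cup\{1\}$, $1$ an adjoined identity; $s\mid t$ means $t\in s\tilde S$. A string is a nonempty $\sigma\subseteq S$ with $0\notin\sigma$, closed under divisors ($s\mid t\in\sigma\Rightarrow s\in\sigma$), and such that any $s_1,s_2\in\sigma$ have a common multiple $s\in\sigma$ ($s_1\mid s$, $s_2\mid s$). Maximal: not properly contained in another string. The interior of a string $\sigma$ is $\{s\in S:\exists p\in S,\ sp\in\sigma\}$; $\sigma$ is open if it equals its interior. *)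

theory Defs
  imports Main
begin

text \<open>A semigroup with zero is modelled by the sort {semigroup_mult, mult_zero}
  (associative multiplication, 0 * a = 0 = a * 0).\<close>

definition zero_left_cancellative :: "('a::{semigroup_mult,mult_zero}) itself \<Rightarrow> bool" where
  "zero_left_cancellative _ \<longleftrightarrow>
     (\<forall>s t r :: 'a. s * t = s * r \<and> s * t \<noteq> 0 \<longrightarrow> t = r)"

text \<open>s divides t: t \<in> s S~, where S~ = S with an adjoined identity.\<close>
definition sdvd :: "'a::{semigroup_mult,mult_zero} \<Rightarrow> 'a \<Rightarrow> bool" where
  "sdvd s t \<longleftrightarrow> t = s \<or> (\<exists>u. t = s * u)"

definition is_string :: "('a::{semigroup_mult,mult_zero}) set \<Rightarrow> bool" where
  "is_string \<sigma> \<longleftrightarrow> \<sigma> \<noteq> {} \<and> 0 \<notin> \<sigma>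
     \<and> (\<forall>s t. sdvd s t \<and> t \<in> \<sigma> \<longrightarrow> s \<in> \<sigma>)
     \<and> (\<forall>s1\<in>\<sigma>. \<forall>s2\<in>\<sigma>. \<exists>s\<in>\<sigma>. sdvd s1 s \<and> sdvd s2 s)"

definition maximal_string :: "('a::{semigroup_mult,mult_zero}) set \<Rightarrow> bool" where
  "maximal_string \<sigma> \<longleftrightarrow> is_string \<sigma> \<and> (\<forall>\<tau>. is_string \<tau> \<and> \<sigma> \<subseteq> \<tau> \<longrightarrow> \<tau> = \<sigma>)"

definition string_interior :: "('a::{semigroup_mult,mult_zero}) set \<Rightarrow> 'a set" where
  "string_interior \<sigma> = {s. \<exists>p. s * p \<in> \<sigma>}"

definition open_string :: "('a::{semigroup_mult,mult_zero}) set \<Rightarrow> bool" where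
  "open_string \<sigma> \<longleftrightarrow> \<sigma> = string_interior \<sigma>"

end

theory Submission
  imports Defs
begin

text \<open>If \<sigma> is not open, some r \<in> \<sigma> has no multiple r p in \<sigma>. Any t \<in> \<sigma> has a common
  multiple with r inside \<sigma>, and that multiple can only be r itself, so \<sigma> is the set of
  divisors of r. If some r p were nonzero, the divisors of r p would form a string strictly
  containing \<sigma>, contradicting maximality.\<close>

lemma sdvd_refl: "sdvd s s"
  by (simp add: sdvd_def)

lemma sdvd_mult: "sdvd s (s * p)"
  by (auto simp: sdvd_def)

lemma sdvd_trans:
  fixes a b c :: "'a::{semigroup_mult,mult_zero}"
  shows "sdvd a b \<Longrightarrow> sdvd b c \<Longrightarrow> sdvd a c"
  unfolding sdvd_def by (metis mult.assoc)

lemma is_string_divisors: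
  fixes q :: "'a::{semigroup_mult,mult_zero}"
  assumes "q \<noteq> 0"
  shows "is_string {t. sdvd t q}"
  unfolding is_string_def
proof (intro conjI ballI allI impI)
  show "{t. sdvd t q} \<noteq> {}" using sdvd_refl by blast
  show "0 \<notin> {t. sdvd t q}" using assms by (auto simp: sdvd_def)
  show "s \<in> {t. sdvd t q}" if "sdvd s t \<and> t \<in> {t. sdvd t q}" for s t
    using that sdvd_trans by blast
  show "\<exists>s\<in>{t. sdvd t q}. sdvd s1 s \<and> sdvd s2 s"
    if "s1 \<in> {t. sdvd t q}" "s2 \<in> {t. sdvd t q}" for s1 s2
    using that sdvd_refl by blast
qed

lemma string_divisor_closed:
  "is_string \<sigma> \<Longrightarrow> sdvd s t \<Longrightarrow> t \<in> \<sigma> \<Longrightarrow> s \<in> \<sigma>"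
  unfolding is_string_def by blast

lemma string_interior_subset:
  assumes "is_string \<sigma>"
  shows "string_interior \<sigma> \<subseteq> \<sigma>"
  unfolding string_interior_def
  using string_divisor_closed[OF assms] sdvd_mult by blast

lemma not_open_string_obtains_top:
  assumes "is_string \<sigma>" and "\<not> open_string \<sigma>"
  obtains r where "r \<in> \<sigma>" and "\<And>p. r * p \<notin> \<sigma>"
  using assms string_interior_subset
  unfolding open_string_def string_interior_def by blast

lemma string_eq_divisors_of_top:
  assumes "is_string \<sigma>" and "r \<in> \<sigma>" and top: "\<And>p. r * p \<notin> \<sigma>"
  shows "\<sigma> = {t. sdvd t r}"
proof
  show "\<sigma> \<subseteq> {t. sdvd t r}"
  proof
    fix t assume "t \<in> \<sigma>"
    with assms(1,2) obtain s where "s \<in> \<sigma>" "sdvd r s" "sdvd t s"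
      unfolding is_string_def by blast
    moreover from \<open>s \<in> \<sigma>\<close> \<open>sdvd r s\<close> top have "s = r"
      by (auto simp: sdvd_def)
    ultimately show "t \<in> {t. sdvd t r}" by simp
  qed
  show "{t. sdvd t r} \<subseteq> \<sigma>"
    using string_divisor_closed[OF assms(1) _ assms(2)] by blast
qed

lemma maximal_string_top_annihilates:
  assumes max: "maximal_string \<sigma>" and "r \<in> \<sigma>" and top: "\<And>p. r * p \<notin> \<sigma>"
  shows "r * p = 0"
proof (rule ccontr)
  assume "r * p \<noteq> 0"
  have "is_string \<sigma>" using max by (simp add: maximal_string_def)
  then have "\<sigma> = {t. sdvd t r}"
    using string_eq_divisors_of_top \<open>r \<in> \<sigma>\<close> top by blast
  then have "\<sigma> \<subseteq> {t. sdvd t (r * p)}"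
    using sdvd_trans sdvd_mult by blast
  with max is_string_divisors[OF \<open>r * p \<noteq> 0\<close>] have "{t. sdvd t (r * p)} = \<sigma>"
    unfolding maximal_string_def by blast
  then have "r * p \<in> \<sigma>" using sdvd_refl by blast
  with top show False by blast
qed

theorem proposition11p3:
  fixes \<sigma> :: "('a::{semigroup_mult,mult_zero}) set"
  assumes "zero_left_cancellative TYPE('a)"
    and "maximal_string \<sigma>"
  shows "open_string \<sigma> \<or> (\<exists>r. \<sigma> = {t. sdvd t r} \<and> (\<forall>p. r * p = 0))"
proof (cases "open_string \<sigma>")
  case False
  have "is_string \<sigma>" using assms(2) by (simp add: maximal_string_def)
  then obtain r where "r \<in> \<sigma>" and top: "\<And>p. r * p \<notin> \<sigma>"
    using not_open_string_obtains_top False by blast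
  have "\<sigma> = {t. sdvd t r}"
    by (rule string_eq_divisors_of_top[OF \<open>is_string \<sigma>\<close> \<open>r \<in> \<sigma>\<close> top])
  moreover have "\<forall>p. r * p = 0"
    using maximal_string_top_annihilates[OF assms(2) \<open>r \<in> \<sigma>\<close> top] by blast
  ultimately show ?thesis by blast
qed simp

end
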